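(* Let $\rho \in (0,+\infty)$ and let $\overline{B}_\rho := \{u \in C([0,1]) : \|u\|_\infty \le \rho\}$, $\partial B_\rho := \{u \in C([0,1]) : \|u\|_\infty = \rho\}$, where $\|u\|_\infty = \sup_{t\in[0,1]}|u(t)|$. Assume that: (1) $k : [0,1]^2 \to [0,+\infty)$ is continuous; (2) $H : \overline{B}_\rho \to \mathbb{R}$ is continuous and there exist $\underline{H_\rho}, \overline{H_\rho} \in \mathbb{R}$ such that $\underline{H_\rho} \le H[u] \le \overline{H_\rho}$ for every $u \in \overline{B}_\rho$; (3) $f : \Pi_\rho \to \mathbb{R}$ is continuous, where $\Pi_\rho := [0,1]\times[-\rho,\rho]\times[\underline{H_\rho},\overline{H_\rho}] \subset \mathbb{R}^3$; (4) there exist continuous functions $\underline{f_\rho}, \overline{f_\rho} : [0,1] \to \mathbb{R}$ such that $\underline{f_\rho}(t) \le f(t,u,v) \le \overline{f_\rho}(t)$ for every $(t,u,v) \in \Pi_\rho$; (5) setting $\underline{F_\rho}(t) := \int_0^1 k(t,s)\underline{f_\rho}(s)\,ds$ and $\overline{F_\rho}(t) := \int_0^1 k(t,s)\overline{f_\rho}(s)\,ds$, at least one of the following holds: (5a) there exists $t_\rho \in [0,1]$ with $\overline{F_\rho}(t_\rho) < 0$; (5b) there exists $t_\rho \in [0,1]$ with $\underline{F_\rho}(t_\rho) > 0$. Then there exist $\lambda_\rho^+ > 0$, $\lambda_\rho^- < 0$ and $u^+, u^- \in \partial B_\rho$ such that $(\lambda,u) = (\lambda_\rho^+,u^+)$ and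 $(\lambda,u) = (\lambda_\rho^-,u^-)$ both satisfy $$u(t) = \lambda \int_0^1 k(t,s)\, f(s,u(s),H[u])\,ds \quad \text{for all } t \in [0,1].$$ Furthermore, if $\lambda_\rho \in \mathbb{R}$ and $u_\rho \in \overline{B}_\rho$ satisfy $u_\rho(t) = \lambda_\rho \int_0^1 k(t,s)\, f(s,u_\rho(s),H[u_\rho])\,ds$ for all $t\in[0,1]$, then: (6a) if (5a) holds, $|\lambda_\rho| \le -\dfrac{\rho}{\overline{F_\rho}(t_\rho)}$; (6b) if (5b) holds, $|\lambda_\rho| \le \dfrac{\rho}{\underline{F_\rho}(t_\rho)}$.
   Context: $C([0,1])$ denotes the Banach space of real-valued continuous functions on $[0,1]$ with the supremum norm $\|\cdot\|_\infty$. *)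

theory Defs
  imports "HOL-Analysis.Analysis"
begin

text \<open>Elements of C([0,1]) are represented as functions real => real that are
continuous on [0,1]; only their values on [0,1] matter.\<close>

definition C01 :: "(real \<Rightarrow> real) set" where
  "C01 = {u. continuous_on {0..1} u}"

definition supnorm :: "(real \<Rightarrow> real) \<Rightarrow> real" where
  "supnorm u = (SUP t\<in>{0..1}. \<bar>u t\<bar>)"

definition closed_ball_C01 :: "real \<Rightarrow> (real \<Rightarrow> real) set" where
  "closed_ball_C01 \<rho> = {u \<in> C01. supnorm u \<le> \<rho>}"

definition sphere_C01 :: "real \<Rightarrow> (real \<Rightarrow> real) set" where
  "sphere_C01 \<rho> = {u \<in> C01. supnorm u = \<rho>}"

definition functional_continuous_on ::
  "(real \<Rightarrow> real) set \<Rightarrow> ((real \<Rightarrow> real) \<Rightarrow> real) \<Rightarrow> bool" where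
  "functional_continuous_on S H \<longleftrightarrow>
     (\<forall>u\<in>S. \<forall>e>0. \<exists>d>0. \<forall>v\<in>S. supnorm (\<lambda>t. v t - u t) < d \<longrightarrow> \<bar>H v - H u\<bar> < e)"

end

(*
  Write T u t = integral_0^1 k(t,s) f(s, u s, H u) ds on the closed ball of radius rho.
  Since k >= 0, the bounds on f give Flo <= T u <= Fhi pointwise; this yields the a priori
  estimates (6a), (6b) at once, and under (5a) or (5b) it shows |T u (t_rho)| >= eta > 0 for
  every u in the ball.

  For existence, discretise on the grid i/N: the map sending nodal values x in [-rho,rho]^(N+1)
  to rho times the nodal values of T (interp x), divided by their largest modulus, is a
  continuous self-map of the cube (the nondegeneracy keeps the denominator positive), so it
  has a fixed point by Brouwer's theorem, which follows from the non-contractibility of spheres.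
  This gives lam_N > 0 and u_N = interp (lam_N T u_N at the nodes) with |lam_N T u_N| = rho
  at some node and lam_N bounded above and away from 0.  The family T(ball) is bounded and
  equicontinuous, so by Arzela-Ascoli a subsequence of lam_N T u_N, and hence of u_N, converges
  uniformly to some w on the sphere of radius rho with w = lam T w, lam > 0.  Replacing f by -f
  gives the negative eigenvalue.
*)

theory Submission
  imports Defs "HOL-Homology.Brouwer_Degree" "HOL-Complex_Analysis.Great_Picard"
begin

section \<open>Brouwer's fixed point theorem for cubes of finite sequences\<close>

definition ndisc :: "nat \<Rightarrow> (nat \<Rightarrow> real) set" where
  "ndisc m = {x. (\<Sum>i\<le>m. x i ^ 2) \<le> 1 \<and> (\<forall>i>m. x i = 0)}"

lemma contractible_ndisc: "contractible (ndisc m)"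
proof -
  define h where "h = (\<lambda>(t::real, x::nat \<Rightarrow> real) i. (1 - t) * x i)"
  have "continuous_on ({0..1} \<times> ndisc m) h"
    unfolding h_def case_prod_beta
    by (intro continuous_intros continuous_on_product_then_coordinatewise)
  moreover have "h (t, x) \<in> ndisc m" if t: "t \<in> {0..1}" and x: "x \<in> ndisc m" for t x
  proof -
    have "(\<Sum>i\<le>m. ((1 - t) * x i) ^ 2) = (1 - t) ^ 2 * (\<Sum>i\<le>m. x i ^ 2)"
      by (simp add: power_mult_distrib sum_distrib_left)
    also have "\<dots> \<le> 1"
      using t x by (intro mult_le_one) (auto simp: ndisc_def power_le_one sum_nonneg)
    finally show ?thesis using x by (simp add: h_def ndisc_def)
  qed
  ultimately show ?thesis
    unfolding contractible_def homotopic_with [OF refl]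
    by (intro exI[of _ "\<lambda>i. 0"] exI[of _ h]) (auto simp: h_def)
qed

lemma not_contractible_sphere:
  fixes m :: nat
  shows "\<not> contractible {x. (\<Sum>i\<le>m. x i ^ 2) = 1 \<and> (\<forall>i>m. x i = (0::real))}"
  using non_contractible_space_nsphere[of m]
  by (simp add: nsphere euclidean_product_topology)

lemma Brouwer_ndisc:
  assumes cont: "continuous_on (ndisc m) F" and into: "F \<in> ndisc m \<rightarrow> ndisc m"
  shows "\<exists>x\<in>ndisc m. F x = x"
proof (rule ccontr)
  assume no_fix: "\<not> (\<exists>x\<in>ndisc m. F x = x)"
  define S where "S = {x. (\<Sum>i\<le>m. x i ^ 2) = 1 \<and> (\<forall>i>m. x i = (0::real))}"
  define a where "a x = (\<Sum>i\<le>m. (x i - F x i) ^ 2)" for x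
  define b where "b x = (\<Sum>i\<le>m. x i * (x i - F x i))" for x
  define c where "c x = (\<Sum>i\<le>m. x i ^ 2) - 1" for x :: "nat \<Rightarrow> real"
  \<comment> \<open>\<open>r x\<close> is where the ray from \<open>F x\<close> through \<open>x\<close> leaves the disc: \<open>t x \<ge> 0\<close> solves
    \<open>a x * t\<^sup>2 + 2 * b x * t + c x = 0\<close>.\<close>
  define t where "t x = (- b x + sqrt (b x ^ 2 - a x * c x)) / a x" for x
  define r where "r x i = x i + t x * (x i - F x i)" for x i
  have a_pos: "a x > 0" if x: "x \<in> ndisc m" for x
  proof -
    obtain j where j: "F x j \<noteq> x j" using no_fix x by blast
    have "F x \<in> ndisc m" using x into by blast
    with x j have "j \<le> m" unfolding ndisc_def by (metis (mono_tags) mem_Collect_eq not_le)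
    have "0 < (x j - F x j) ^ 2" using j by simp
    also have "\<dots> \<le> a x"
      unfolding a_def by (rule member_le_sum) (use \<open>j \<le> m\<close> in auto)
    finally show ?thesis .
  qed
  have c_nonpos: "c x \<le> 0" if "x \<in> ndisc m" for x
    using that by (simp add: c_def ndisc_def)
  have coords: "continuous_on (ndisc m) (\<lambda>x. x i)" "continuous_on (ndisc m) (\<lambda>x. F x i)" for i
    by (auto intro: continuous_on_product_then_coordinatewise cont continuous_on_id)
  have "continuous_on (ndisc m) t"
    unfolding t_def a_def b_def c_def
    by (intro continuous_intros coords) (use a_pos in \<open>force simp: a_def\<close>)
  then have "continuous_on (ndisc m) r"
    unfolding r_def by (intro continuous_intros coords)
  moreover have "r x \<in> S" if x: "x \<in> ndisc m" for x
  proof -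
    have "a x * c x \<le> 0" using a_pos[OF x] c_nonpos[OF x] by (simp add: mult_nonneg_nonpos)
    then have "0 \<le> b x ^ 2 - a x * c x" by (smt (verit) zero_le_power2)
    then have root: "a x * t x = sqrt (b x ^ 2 - a x * c x) - b x"
      and disc: "sqrt (b x ^ 2 - a x * c x) ^ 2 = b x ^ 2 - a x * c x"
      using a_pos[OF x] by (simp_all add: t_def)
    have "a x * (a x * t x ^ 2 + 2 * b x * t x + c x) =
        (a x * t x + b x) ^ 2 - (b x ^ 2 - a x * c x)"
      by (simp add: power2_eq_square algebra_simps)
    then have quadratic: "a x * t x ^ 2 + 2 * b x * t x + c x = 0"
      using a_pos[OF x] by (simp add: root disc)
    have "(\<Sum>i\<le>m. r x i ^ 2) =
        (\<Sum>i\<le>m. x i ^ 2 + 2 * t x * (x i * (x i - F x i)) + t x ^ 2 * (x i - F x i) ^ 2)"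
      by (simp add: r_def power2_eq_square algebra_simps)
    also have "\<dots> = (c x + 1) + 2 * t x * b x + t x ^ 2 * a x"
      by (simp add: a_def b_def c_def sum.distrib sum_distrib_left)
    finally have "(\<Sum>i\<le>m. r x i ^ 2) = (c x + 1) + 2 * t x * b x + t x ^ 2 * a x" .
    moreover have "F x \<in> ndisc m" using x into by blast
    ultimately show ?thesis
      using quadratic x by (auto simp: S_def r_def ndisc_def algebra_simps)
  qed
  moreover have "r x = x" if x: "x \<in> S" for x
  proof -
    have Fx: "F x \<in> ndisc m" using x into by (auto simp: S_def ndisc_def)
    have "(\<Sum>i\<le>m. 2 * (x i * F x i)) \<le> (\<Sum>i\<le>m. x i ^ 2 + F x i ^ 2)"
      by (intro sum_mono) (simp add: mult.assoc[symmetric] sum_squares_bound)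
    also have "\<dots> \<le> 2"
      using x Fx by (simp add: S_def ndisc_def sum.distrib)
    finally have "b x \<ge> 0"
      using x by (simp add: S_def b_def power2_eq_square right_diff_distrib sum_subtractf
          sum_distrib_left[symmetric])
    moreover have "c x = 0" using x by (simp add: S_def c_def)
    ultimately have "t x = 0" by (simp add: t_def)
    then show ?thesis by (simp add: r_def fun_eq_iff)
  qed
  moreover have "S \<subseteq> ndisc m" by (auto simp: S_def ndisc_def)
  ultimately have "S retract_of ndisc m"
    unfolding retract_of_def retraction_def by blast
  then show False
    using retract_of_contractible contractible_ndisc not_contractible_sphere
    unfolding S_def by blast
qed

definition cube :: "nat \<Rightarrow> real \<Rightarrow> (nat \<Rightarrow> real) set" where
  "cube m R = {x. (\<forall>i\<le>m. \<bar>x i\<bar> \<le> R) \<and> (\<forall>i>m. x i = 0)}"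

lemma Brouwer_cube:
  assumes R: "R > 0" and cont: "continuous_on (cube m R) F" and into: "F \<in> cube m R \<rightarrow> cube m R"
  shows "\<exists>x\<in>cube m R. F x = x"
proof -
  \<comment> \<open>\<open>L\<close> is the circumradius of the cube, so \<open>G\<close> maps the unit disc into itself.\<close>
  define L where "L = R * sqrt (Suc m)"
  define clamp where "clamp x i = (if i \<le> m then max (- R) (min R (x i)) else 0)" for x i
  define G where "G y i = F (clamp (\<lambda>j. L * y j)) i / L" for y i
  have L: "L > 0" using R by (simp add: L_def)
  have clamp_cube: "clamp x \<in> cube m R" for x
    using R by (auto simp: clamp_def cube_def)
  have clamp_id: "clamp x = x" if "x \<in> cube m R" for x
    using that by (auto simp: clamp_def cube_def fun_eq_iff abs_le_iff)
  have "continuous_on UNIV (\<lambda>y. clamp (\<lambda>j. L * y j))"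
  proof (intro continuous_on_coordinatewise_then_product)
    fix i show "continuous_on UNIV (\<lambda>y. clamp (\<lambda>j. L * y j) i)"
      by (cases "i \<le> m") (simp_all add: clamp_def continuous_intros)
  qed
  then have "continuous_on UNIV (\<lambda>y. F (clamp (\<lambda>j. L * y j)))"
    by (rule continuous_on_compose2[OF cont]) (use clamp_cube in auto)
  then have "continuous_on UNIV (\<lambda>y. F (clamp (\<lambda>j. L * y j)) i)" for i
    by (rule continuous_on_product_then_coordinatewise)
  then have "continuous_on (ndisc m) G"
    unfolding G_def using L
    by (intro continuous_on_coordinatewise_then_product continuous_on_divide continuous_on_const)
      (auto intro: continuous_on_subset[of UNIV])
  moreover have "G y \<in> ndisc m" for y
  proof -
    have Fy: "F (clamp (\<lambda>j. L * y j)) \<in> cube m R" using into clamp_cube by blast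
    have "(\<Sum>i\<le>m. G y i ^ 2) \<le> (\<Sum>i\<le>m. (R / L) ^ 2)"
    proof (intro sum_mono)
      fix i assume "i \<in> {..m}"
      then have "\<bar>G y i\<bar> \<le> R / L"
        using Fy L by (simp add: G_def cube_def abs_divide divide_right_mono)
      then show "G y i ^ 2 \<le> (R / L) ^ 2"
        by (metis abs_ge_zero power2_abs power_mono)
    qed
    also have "\<dots> = 1"
      using R by (simp add: L_def power_divide power_mult_distrib)
    finally show ?thesis
      using Fy by (simp add: G_def ndisc_def cube_def)
  qed
  ultimately obtain y where y: "y \<in> ndisc m" "G y = y"
    using Brouwer_ndisc by blast
  define x where "x = clamp (\<lambda>j. L * y j)"
  have "F x = (\<lambda>j. L * y j)"
    using y(2) L by (simp add: G_def x_def fun_eq_iff field_simps)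
  then have "x = F x"
    using clamp_id[of "F x"] into clamp_cube unfolding x_def by (metis PiE)
  then show ?thesis using clamp_cube unfolding x_def by metis
qed

lemma continuous_on_finite_coordinates:
  fixes g :: "(nat \<Rightarrow> real) \<Rightarrow> 'a::metric_space"
  assumes "\<And>x e. x \<in> S \<Longrightarrow> e > 0 \<Longrightarrow>
      \<exists>d>0. \<forall>y\<in>S. (\<forall>i\<le>m. \<bar>y i - x i\<bar> < d) \<longrightarrow> dist (g y) (g x) < e"
  shows "continuous_on S g"
  unfolding continuous_on_topological
proof (intro ballI allI impI)
  fix x B assume x: "x \<in> S" and B: "open B" "g x \<in> B"
  obtain e where e: "e > 0" "ball (g x) e \<subseteq> B"
    using B openE by blast
  obtain d where d: "d > 0" "\<forall>y\<in>S. (\<forall>i\<le>m. \<bar>y i - x i\<bar> < d) \<longrightarrow> dist (g y) (g x) < e"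
    using assms[OF x e(1)] by blast
  show "\<exists>A. open A \<and> x \<in> A \<and> (\<forall>y\<in>S. y \<in> A \<longrightarrow> g y \<in> B)"
  proof (intro exI conjI ballI impI)
    show "open {y. \<forall>i\<in>{..m}. y (id i) \<in> ball (x i) d}"
      by (rule product_topology_basis') auto
    show "x \<in> {y. \<forall>i\<in>{..m}. y (id i) \<in> ball (x i) d}"
      using d(1) by simp
    fix y assume "y \<in> S" "y \<in> {y. \<forall>i\<in>{..m}. y (id i) \<in> ball (x i) d}"
    then have "dist (g y) (g x) < e"
      using d(2) by (simp add: dist_real_def abs_minus_commute)
    then show "g y \<in> B"
      using e(2) by (auto simp: dist_commute)
  qed
qed

lemma continuous_on_Max:
  fixes f :: "'i \<Rightarrow> 'a::topological_space \<Rightarrow> 'b::linorder_topology"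
  assumes "finite I" "I \<noteq> {}" "\<And>i. i \<in> I \<Longrightarrow> continuous_on S (f i)"
  shows "continuous_on S (\<lambda>x. Max ((\<lambda>i. f i x) ` I))"
  using assms by (induction I rule: finite_ne_induct) (auto intro: continuous_on_max)

section \<open>The closed ball of C([0,1])\<close>

lemma abs_le_supnorm:
  assumes "continuous_on {0..1} u" "t \<in> {0..1}"
  shows "\<bar>u t\<bar> \<le> supnorm u"
proof -
  have "bounded ((\<lambda>t. \<bar>u t\<bar>) ` {0..1})"
    by (intro compact_imp_bounded compact_continuous_image continuous_intros assms(1)) simp
  then show ?thesis
    unfolding supnorm_def using assms(2) by (intro cSUP_upper2 bounded_imp_bdd_above) auto
qed

lemma supnorm_le:
  assumes "\<And>t. t \<in> {0..1} \<Longrightarrow> \<bar>u t\<bar> \<le> B"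
  shows "supnorm u \<le> B"
  unfolding supnorm_def by (rule cSUP_least) (use assms in auto)

lemma mem_closed_ball_C01:
  "u \<in> closed_ball_C01 \<rho> \<longleftrightarrow> continuous_on {0..1} u \<and> (\<forall>t\<in>{0..1}. \<bar>u t\<bar> \<le> \<rho>)"
  unfolding closed_ball_C01_def C01_def
  by (auto intro: supnorm_le order_trans[OF abs_le_supnorm])

lemma closed_ball_C01_abs_le: "u \<in> closed_ball_C01 \<rho> \<Longrightarrow> t \<in> {0..1} \<Longrightarrow> \<bar>u t\<bar> \<le> \<rho>"
  by (simp add: mem_closed_ball_C01)

lemma mem_sphere_C01I:
  assumes "u \<in> closed_ball_C01 \<rho>" and "\<And>e. e > 0 \<Longrightarrow> \<exists>t\<in>{0..1}. \<rho> - e \<le> \<bar>u t\<bar>"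
  shows "u \<in> sphere_C01 \<rho>"
proof -
  have "\<rho> \<le> supnorm u"
  proof (rule field_le_epsilon)
    fix e :: real assume "e > 0"
    then obtain t where "t \<in> {0..1}" "\<rho> - e \<le> \<bar>u t\<bar>" using assms(2) by blast
    then show "\<rho> \<le> supnorm u + e"
      using abs_le_supnorm[of u t] assms(1) by (simp add: mem_closed_ball_C01)
  qed
  then show ?thesis
    using assms(1) by (simp add: closed_ball_C01_def sphere_C01_def)
qed

section \<open>Interpolation on a uniform grid\<close>

definition node :: "nat \<Rightarrow> nat \<Rightarrow> real" where
  "node N i = real i / real N"

definition hat :: "nat \<Rightarrow> nat \<Rightarrow> real \<Rightarrow> real" where
  "hat N i t = max 0 (1 / real N - \<bar>t - node N i\<bar>)"

text \<open>Dividing by the sum of the hats makes \<open>interp N x t\<close> a weighted average of the values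
  \<open>x i\<close> at the nodes within distance \<open>1 / N\<close> of \<open>t\<close>; only \<open>x 0, \<dots>, x N\<close> are used.\<close>

definition interp :: "nat \<Rightarrow> (nat \<Rightarrow> real) \<Rightarrow> real \<Rightarrow> real" where
  "interp N x t = (\<Sum>i\<le>N. x i * hat N i t) / (\<Sum>i\<le>N. hat N i t)"

lemma node_in_unit_interval: "i \<le> N \<Longrightarrow> node N i \<in> {0..1}"
  by (cases "N = 0") (auto simp: node_def divide_le_eq_1)

lemma node_near:
  assumes N: "N \<ge> 1" and t: "t \<in> {0..1}"
  obtains i where "i \<le> N" "\<bar>t - node N i\<bar> < 1 / real N"
proof
  define r where "r = round (real N * t)"
  have r: "0 \<le> r" "r \<le> int N"
    using round_mono[of 0 "real N * t"] round_mono[of "real N * t" "real N"] t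
    unfolding r_def by (auto simp: mult_left_le)
  then show "nat r \<le> N" by simp
  have "\<bar>t - node N (nat r)\<bar> = \<bar>real N * t - of_int r\<bar> / real N"
  proof -
    have "t - node N (nat r) = (real N * t - of_int r) / real N"
      using N r(1) by (simp add: node_def field_simps)
    then show ?thesis using N by (simp add: abs_divide)
  qed
  also have "\<dots> \<le> (1 / 2) / real N"
    using of_int_round_abs_le[of "real N * t"] unfolding r_def
    by (intro divide_right_mono) (simp_all add: abs_minus_commute)
  also have "\<dots> < 1 / real N" using N by (simp add: frac_less2)
  finally show "\<bar>t - node N (nat r)\<bar> < 1 / real N" .
qed

lemma hat_nonneg: "hat N i t \<ge> 0"
  by (simp add: hat_def)

lemma hat_sum_pos:
  assumes "N \<ge> 1" "t \<in> {0..1}"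
  shows "(\<Sum>i\<le>N. hat N i t) > 0"
proof -
  obtain j where j: "j \<le> N" "\<bar>t - node N j\<bar> < 1 / real N"
    using node_near[OF assms] .
  have "0 < hat N j t" using j(2) by (simp add: hat_def)
  also have "\<dots> \<le> (\<Sum>i\<le>N. hat N i t)"
    by (rule member_le_sum) (use j(1) hat_nonneg in auto)
  finally show ?thesis .
qed

lemma continuous_on_interp:
  assumes "N \<ge> 1"
  shows "continuous_on {0..1} (interp N x)"
  unfolding interp_def hat_def
  using hat_sum_pos[OF assms] by (intro continuous_intros) (force simp: hat_def)

lemma interp_diff: "interp N x t - interp N y t = interp N (\<lambda>i. x i - y i) t"
  by (simp add: interp_def diff_divide_distrib[symmetric] sum_subtractf left_diff_distrib)

lemma interp_approx:
  assumes N: "N \<ge> 1" and t: "t \<in> {0..1}"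
    and near: "\<And>i. i \<le> N \<Longrightarrow> \<bar>t - node N i\<bar> < 1 / real N \<Longrightarrow> \<bar>x i - w\<bar> \<le> e"
  shows "\<bar>interp N x t - w\<bar> \<le> e"
proof -
  let ?S = "\<Sum>i\<le>N. hat N i t"
  have S: "?S > 0" using hat_sum_pos[OF N t] .
  have "\<bar>x i - w\<bar> * hat N i t \<le> e * hat N i t" if "i \<le> N" for i
  proof (cases "\<bar>t - node N i\<bar> < 1 / real N")
    case True
    then show ?thesis using near[OF that] hat_nonneg by (intro mult_right_mono)
  qed (simp add: hat_def)
  then have "\<bar>\<Sum>i\<le>N. (x i - w) * hat N i t\<bar> \<le> e * ?S"
    unfolding sum_distrib_left
    by (intro order_trans[OF sum_abs] sum_mono) (simp add: abs_mult hat_nonneg)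
  moreover have "interp N x t - w = (\<Sum>i\<le>N. (x i - w) * hat N i t) / ?S"
    using S by (simp add: interp_def field_simps sum_subtractf left_diff_distrib sum_distrib_left)
  ultimately show ?thesis
    using S by (simp add: abs_divide divide_le_eq)
qed

lemma interp_cong: "(\<And>i. i \<le> N \<Longrightarrow> x i = y i) \<Longrightarrow> interp N x = interp N y"
  by (simp add: interp_def fun_eq_iff)

lemma interp_mem_closed_ball_C01:
  assumes "N \<ge> 1" "\<And>i. i \<le> N \<Longrightarrow> \<bar>x i\<bar> \<le> R"
  shows "interp N x \<in> closed_ball_C01 R"
  using interp_approx[OF assms(1), of _ x 0 R] assms
  by (simp add: mem_closed_ball_C01 continuous_on_interp)

section \<open>Eigenpairs of integral operators on the closed ball\<close>

lemma continuous_on_kernel_section: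
  fixes k :: "real \<Rightarrow> real \<Rightarrow> real"
  assumes "continuous_on ({0..1} \<times> {0..1}) (\<lambda>(t, s). k t s)" "t \<in> {0..1}"
  shows "continuous_on {0..1} (k t)"
  using continuous_on_o_Pair[OF assms] by (simp add: o_def)

lemma kernel_equicontinuous:
  fixes k :: "real \<Rightarrow> real \<Rightarrow> real"
  assumes "continuous_on ({0..1} \<times> {0..1}) (\<lambda>(t, s). k t s)" "e > 0"
  obtains d where "d > 0" and "\<And>t t' s. t \<in> {0..1} \<Longrightarrow> t' \<in> {0..1} \<Longrightarrow> s \<in> {0..1} \<Longrightarrow>
    \<bar>t - t'\<bar> < d \<Longrightarrow> \<bar>k t s - k t' s\<bar> < e"
proof -
  have "uniformly_continuous_on ({0..1} \<times> {0..1}) (\<lambda>(t, s). k t s)"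
    by (intro compact_uniformly_continuous assms(1) compact_Times compact_Icc)
  then obtain d where "d > 0" and d: "\<And>x x'. x \<in> {0..1} \<times> {0..1} \<Longrightarrow> x' \<in> {0..1} \<times> {0..1} \<Longrightarrow>
      dist x' x < d \<Longrightarrow> dist ((\<lambda>(t, s). k t s) x') ((\<lambda>(t, s). k t s) x) < e"
    using assms(2) uniformly_continuous_onE by blast
  show ?thesis
  proof (rule that[OF \<open>d > 0\<close>])
    fix t t' s :: real
    assume "t \<in> {0..1}" "t' \<in> {0..1}" "s \<in> {0..1}" "\<bar>t - t'\<bar> < d"
    then show "\<bar>k t s - k t' s\<bar> < e"
      using d[of "(t', s)" "(t, s)"] by (simp add: dist_Pair_Pair dist_real_def)
  qed
qed

lemma integral_weighted_mono:
  fixes w h1 h2 :: "real \<Rightarrow> real"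
  assumes "continuous_on {a..b} w" "continuous_on {a..b} h1" "continuous_on {a..b} h2"
    and "\<And>s. s \<in> {a..b} \<Longrightarrow> 0 \<le> w s" "\<And>s. s \<in> {a..b} \<Longrightarrow> h1 s \<le> h2 s"
  shows "integral {a..b} (\<lambda>s. w s * h1 s) \<le> integral {a..b} (\<lambda>s. w s * h2 s)"
  using assms
  by (intro integral_le integrable_continuous_interval continuous_intros mult_left_mono) auto

locale integral_operator =
  fixes \<rho> :: real and k :: "real \<Rightarrow> real \<Rightarrow> real"
    and g :: "(real \<Rightarrow> real) \<Rightarrow> real \<Rightarrow> real" and K M :: real
  assumes rho_pos: "\<rho> > 0"
    and kernel_cont: "continuous_on ({0..1} \<times> {0..1}) (\<lambda>(t, s). k t s)"
    and kernel_bound: "\<And>t s. t \<in> {0..1} \<Longrightarrow> s \<in> {0..1} \<Longrightarrow> \<bar>k t s\<bar> \<le> K"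
    and g_cont: "\<And>u. u \<in> closed_ball_C01 \<rho> \<Longrightarrow> continuous_on {0..1} (g u)"
    and g_bound: "\<And>u s. u \<in> closed_ball_C01 \<rho> \<Longrightarrow> s \<in> {0..1} \<Longrightarrow> \<bar>g u s\<bar> \<le> M"
    and g_continuous_sup: "\<And>u e. u \<in> closed_ball_C01 \<rho> \<Longrightarrow> e > 0 \<Longrightarrow>
      \<exists>d>0. \<forall>v\<in>closed_ball_C01 \<rho>. (\<forall>s\<in>{0..1}. \<bar>v s - u s\<bar> \<le> d) \<longrightarrow>
        (\<forall>s\<in>{0..1}. \<bar>g v s - g u s\<bar> \<le> e)"
begin

definition T :: "(real \<Rightarrow> real) \<Rightarrow> real \<Rightarrow> real" where
  "T u t = integral {0..1} (\<lambda>s. k t s * g u s)"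

lemma continuous_on_integrand:
  assumes "u \<in> closed_ball_C01 \<rho>" "t \<in> {0..1}"
  shows "continuous_on {0..1} (\<lambda>s. k t s * g u s)"
  by (intro continuous_intros continuous_on_kernel_section[OF kernel_cont] g_cont assms)

lemma T_bound:
  assumes "u \<in> closed_ball_C01 \<rho>" "t \<in> {0..1}"
  shows "\<bar>T u t\<bar> \<le> K * M"
proof -
  have "norm (integral {0..1} (\<lambda>s. k t s * g u s)) \<le> K * M * (1 - 0)"
    using continuous_on_integrand[OF assms] kernel_bound[OF assms(2)] g_bound[OF assms(1)]
    by (intro integral_bound) (auto simp: abs_mult intro: mult_mono')
  then show ?thesis by (simp add: T_def)
qed

lemma T_diff_le:
  assumes u: "u \<in> closed_ball_C01 \<rho>" and v: "v \<in> closed_ball_C01 \<rho>" and t: "t \<in> {0..1}"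
    and close: "\<And>s. s \<in> {0..1} \<Longrightarrow> \<bar>g v s - g u s\<bar> \<le> e"
  shows "\<bar>T v t - T u t\<bar> \<le> K * e"
proof -
  have "T v t - T u t = integral {0..1} (\<lambda>s. k t s * g v s - k t s * g u s)"
    unfolding T_def
    by (intro integral_diff[symmetric] integrable_continuous_interval continuous_on_integrand u v t)
  also have "norm \<dots> \<le> K * e * (1 - 0)"
  proof (intro integral_bound)
    show "continuous_on {0..1} (\<lambda>s. k t s * g v s - k t s * g u s)"
      by (intro continuous_intros continuous_on_integrand u v t)
    fix s :: real assume s: "s \<in> {0..1}"
    have "\<bar>k t s\<bar> * \<bar>g v s - g u s\<bar> \<le> K * e"
      using kernel_bound[OF t s] close[OF s] by (intro mult_mono') auto
    then show "norm (k t s * g v s - k t s * g u s) \<le> K * e"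
      by (simp add: abs_mult flip: right_diff_distrib)
  qed simp
  finally show ?thesis by simp
qed

lemma T_continuous:
  assumes u: "u \<in> closed_ball_C01 \<rho>" and e: "e > 0"
  shows "\<exists>d>0. \<forall>v\<in>closed_ball_C01 \<rho>. (\<forall>s\<in>{0..1}. \<bar>v s - u s\<bar> \<le> d) \<longrightarrow>
    (\<forall>t\<in>{0..1}. \<bar>T v t - T u t\<bar> < e)"
proof -
  have K: "K \<ge> 0" using kernel_bound[of 0 0] by simp
  obtain d where "d > 0" and d: "\<forall>v\<in>closed_ball_C01 \<rho>. (\<forall>s\<in>{0..1}. \<bar>v s - u s\<bar> \<le> d) \<longrightarrow>
      (\<forall>s\<in>{0..1}. \<bar>g v s - g u s\<bar> \<le> e / (K + 1))"
    using g_continuous_sup[OF u] e K by (metis divide_pos_pos add_nonneg_pos zero_less_one)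
  have "K * (e / (K + 1)) < e"
    using K e by (simp add: field_simps)
  with d \<open>d > 0\<close> show ?thesis
    by (meson T_diff_le u order.strict_trans1)
qed

lemma T_equicontinuous:
  assumes e: "e > 0"
  shows "\<exists>d>0. \<forall>u\<in>closed_ball_C01 \<rho>. \<forall>t\<in>{0..1}. \<forall>t'\<in>{0..1}.
    \<bar>t - t'\<bar> < d \<longrightarrow> \<bar>T u t - T u t'\<bar> \<le> e"
proof -
  have M: "M \<ge> 0" using g_bound[of "\<lambda>_. 0" 0] rho_pos by (simp add: mem_closed_ball_C01)
  obtain d where "d > 0" and d: "\<And>t t' s. t \<in> {0..1} \<Longrightarrow> t' \<in> {0..1} \<Longrightarrow> s \<in> {0..1} \<Longrightarrow>
      \<bar>t - t'\<bar> < d \<Longrightarrow> \<bar>k t s - k t' s\<bar> < e / (M + 1)"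
    using kernel_equicontinuous[OF kernel_cont] e M
    by (metis add_nonneg_pos divide_pos_pos zero_less_one)
  show ?thesis
  proof (intro exI conjI ballI impI)
    fix u t t' assume u: "u \<in> closed_ball_C01 \<rho>" and t: "t \<in> {0..1}" "t' \<in> {0..1}"
      and close: "\<bar>t - t'\<bar> < d"
    have "T u t - T u t' = integral {0..1} (\<lambda>s. k t s * g u s - k t' s * g u s)"
      unfolding T_def
      by (intro integral_diff[symmetric] integrable_continuous_interval continuous_on_integrand u t)
    also have "norm \<dots> \<le> e / (M + 1) * M * (1 - 0)"
    proof (intro integral_bound)
      show "continuous_on {0..1} (\<lambda>s. k t s * g u s - k t' s * g u s)"
        by (intro continuous_intros continuous_on_integrand u t)
      fix s :: real assume s: "s \<in> {0..1}"
      have "\<bar>k t s - k t' s\<bar> * \<bar>g u s\<bar> \<le> e / (M + 1) * M"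
        using d[OF t s close] g_bound[OF u s] by (intro mult_mono') auto
      then show "norm (k t s * g u s - k t' s * g u s) \<le> e / (M + 1) * M"
        by (simp add: abs_mult flip: left_diff_distrib)
    qed simp
    also have "\<dots> \<le> e"
      using e M by (simp add: field_simps)
    finally show "\<bar>T u t - T u t'\<bar> \<le> e" by simp
  qed (fact \<open>d > 0\<close>)
qed

lemma T_tendsto:
  assumes v: "\<And>n. v n \<in> closed_ball_C01 \<rho>" and w: "w \<in> closed_ball_C01 \<rho>"
    and lim: "uniform_limit {0..1} v w sequentially" and t: "t \<in> {0..1}"
  shows "(\<lambda>n. T (v n) t) \<longlonglongrightarrow> T w t"
proof (rule LIMSEQ_I)
  fix e :: real assume "e > 0"
  then obtain d where "d > 0" and d: "\<forall>v\<in>closed_ball_C01 \<rho>. (\<forall>s\<in>{0..1}. \<bar>v s - w s\<bar> \<le> d) \<longrightarrow>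
      (\<forall>t\<in>{0..1}. \<bar>T v t - T w t\<bar> < e)"
    using T_continuous[OF w] by blast
  obtain n0 where n0: "\<forall>n\<ge>n0. \<forall>s\<in>{0..1}. dist (v n s) (w s) < d"
    using lim \<open>d > 0\<close> unfolding uniform_limit_sequentially_iff by blast
  show "\<exists>n0. \<forall>n\<ge>n0. norm (T (v n) t - T w t) < e"
  proof (intro exI allI impI)
    fix n assume "n \<ge> n0"
    then have "\<forall>s\<in>{0..1}. \<bar>v n s - w s\<bar> \<le> d"
      using n0 by (force simp: dist_real_def)
    then show "norm (T (v n) t - T w t) < e"
      using d v t by simp
  qed
qed

lemma T_between_kernel_integrals:
  assumes k_nonneg: "\<And>s. s \<in> {0..1} \<Longrightarrow> 0 \<le> k t s"
    and lo: "continuous_on {0..1} lo" and hi: "continuous_on {0..1} hi"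
    and u: "u \<in> closed_ball_C01 \<rho>" and t: "t \<in> {0..1}"
    and between: "\<And>s. s \<in> {0..1} \<Longrightarrow> lo s \<le> g u s \<and> g u s \<le> hi s"
  shows "integral {0..1} (\<lambda>s. k t s * lo s) \<le> T u t \<and> T u t \<le> integral {0..1} (\<lambda>s. k t s * hi s)"
  unfolding T_def using k_nonneg between
  by (intro conjI integral_weighted_mono continuous_on_kernel_section[OF kernel_cont t]
      g_cont u lo hi) auto

lemma eigenvalue_bound:
  assumes u: "u \<in> closed_ball_C01 \<rho>" and t: "t \<in> {0..1}" and eq: "u t = lam * T u t"
    and c: "0 < c" "c \<le> \<bar>T u t\<bar>"
  shows "\<bar>lam\<bar> \<le> \<rho> / c"
proof -
  have "\<bar>lam\<bar> * c \<le> \<bar>lam\<bar> * \<bar>T u t\<bar>" using c by (simp add: mult_left_mono)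
  also have "\<dots> = \<bar>u t\<bar>" by (simp add: eq abs_mult)
  also have "\<dots> \<le> \<rho>" using u t by (simp add: mem_closed_ball_C01)
  finally show ?thesis using c by (simp add: pos_le_divide_eq)
qed

lemma continuous_on_T_interp:
  assumes N: "N \<ge> 1" and t: "t \<in> {0..1}"
  shows "continuous_on (cube N \<rho>) (\<lambda>x. T (interp N x) t)"
proof (rule continuous_on_finite_coordinates)
  fix x and e :: real assume x: "x \<in> cube N \<rho>" and e: "e > 0"
  have u: "interp N x \<in> closed_ball_C01 \<rho>"
    using x by (intro interp_mem_closed_ball_C01 N) (simp add: cube_def)
  obtain d where "d > 0" and d: "\<forall>v\<in>closed_ball_C01 \<rho>. (\<forall>s\<in>{0..1}. \<bar>v s - interp N x s\<bar> \<le> d) \<longrightarrow>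
      (\<forall>t\<in>{0..1}. \<bar>T v t - T (interp N x) t\<bar> < e)"
    using T_continuous[OF u e] by blast
  show "\<exists>d>0. \<forall>y\<in>cube N \<rho>. (\<forall>i\<le>N. \<bar>y i - x i\<bar> < d) \<longrightarrow>
      dist (T (interp N y) t) (T (interp N x) t) < e"
  proof (intro exI conjI ballI impI)
    fix y assume y: "y \<in> cube N \<rho>" and close: "\<forall>i\<le>N. \<bar>y i - x i\<bar> < d"
    have "\<bar>interp N y s - interp N x s\<bar> \<le> d" if "s \<in> {0..1}" for s
      unfolding interp_diff using interp_approx[OF N that, of _ 0 d] close
      by (simp add: less_imp_le)
    moreover have "interp N y \<in> closed_ball_C01 \<rho>"
      using y by (intro interp_mem_closed_ball_C01 N) (simp add: cube_def)
    ultimately show "dist (T (interp N y) t) (T (interp N x) t) < e"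
      using d t by (simp add: dist_real_def)
  qed (fact \<open>d > 0\<close>)
qed

definition nodal_max :: "nat \<Rightarrow> (real \<Rightarrow> real) \<Rightarrow> real" where
  "nodal_max N u = Max ((\<lambda>i. \<bar>T u (node N i)\<bar>) ` {..N})"

lemma abs_T_node_le_nodal_max: "i \<le> N \<Longrightarrow> \<bar>T u (node N i)\<bar> \<le> nodal_max N u"
  unfolding nodal_max_def by (intro Max_ge) auto

lemma nodal_max_attained: "\<exists>i\<le>N. \<bar>T u (node N i)\<bar> = nodal_max N u"
proof -
  have "nodal_max N u \<in> (\<lambda>i. \<bar>T u (node N i)\<bar>) ` {..N}"
    unfolding nodal_max_def by (intro Max_in) auto
  then show ?thesis by auto
qed

lemma nodal_max_le: "u \<in> closed_ball_C01 \<rho> \<Longrightarrow> nodal_max N u \<le> K * M"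
  unfolding nodal_max_def using T_bound node_in_unit_interval by simp

lemma continuous_on_nodal_max_interp:
  "N \<ge> 1 \<Longrightarrow> continuous_on (cube N \<rho>) (\<lambda>x. nodal_max N (interp N x))"
  unfolding nodal_max_def
  by (intro continuous_on_Max continuous_intros continuous_on_T_interp node_in_unit_interval) auto

lemma normalised_fixed_point:
  assumes N: "N \<ge> 1" and \<eta>: "\<eta> > 0"
    and nondeg: "\<And>u. u \<in> closed_ball_C01 \<rho> \<Longrightarrow> \<exists>i\<le>N. \<eta> \<le> \<bar>T u (node N i)\<bar>"
  obtains x where "x \<in> cube N \<rho>"
    and "\<And>i. i \<le> N \<Longrightarrow> x i = \<rho> / nodal_max N (interp N x) * T (interp N x) (node N i)"
proof -
  define \<Phi> where
    "\<Phi> x i = (if i \<le> N then \<rho> / nodal_max N (interp N x) * T (interp N x) (node N i) else 0)"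
    for x i
  have ball: "interp N x \<in> closed_ball_C01 \<rho>" if "x \<in> cube N \<rho>" for x
    using that by (intro interp_mem_closed_ball_C01 N) (simp add: cube_def)
  have max_ge: "\<eta> \<le> nodal_max N (interp N x)" if "x \<in> cube N \<rho>" for x
    using nondeg[OF ball[OF that]] abs_T_node_le_nodal_max by (meson order_trans)
  have "continuous_on (cube N \<rho>) (\<lambda>x. \<Phi> x i)" for i
  proof (cases "i \<le> N")
    case True
    then show ?thesis
      unfolding \<Phi>_def using continuous_on_nodal_max_interp[OF N] max_ge \<eta>
      by (force intro!: continuous_intros continuous_on_T_interp N node_in_unit_interval)
  qed (simp add: \<Phi>_def)
  then have "continuous_on (cube N \<rho>) \<Phi>"
    by (rule continuous_on_coordinatewise_then_product)
  moreover have "\<Phi> \<in> cube N \<rho> \<rightarrow> cube N \<rho>"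
  proof
    fix x assume x: "x \<in> cube N \<rho>"
    have "\<bar>\<Phi> x i\<bar> \<le> \<rho>" if "i \<le> N" for i
    proof -
      have "\<rho> * \<bar>T (interp N x) (node N i)\<bar> \<le> \<rho> * nodal_max N (interp N x)"
        using abs_T_node_le_nodal_max[OF that] rho_pos by (intro mult_left_mono) auto
      then show ?thesis
        using that max_ge[OF x] \<eta> rho_pos by (simp add: \<Phi>_def abs_mult abs_divide pos_divide_le_eq)
    qed
    then show "\<Phi> x \<in> cube N \<rho>" by (simp add: cube_def \<Phi>_def)
  qed
  ultimately obtain x where x: "x \<in> cube N \<rho>" "\<Phi> x = x"
    using Brouwer_cube[OF rho_pos] by blast
  show thesis
  proof (rule that[OF x(1)])
    fix i assume "i \<le> N"
    then show "x i = \<rho> / nodal_max N (interp N x) * T (interp N x) (node N i)"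
      using fun_cong[OF x(2), of i] by (simp add: \<Phi>_def)
  qed
qed

lemma discrete_eigenpair:
  assumes N: "N \<ge> 1" and \<eta>: "\<eta> > 0"
    and nondeg: "\<And>u. u \<in> closed_ball_C01 \<rho> \<Longrightarrow> \<exists>i\<le>N. \<eta> \<le> \<bar>T u (node N i)\<bar>"
  shows "\<exists>lam u. u \<in> closed_ball_C01 \<rho> \<and> \<rho> / (K * M) \<le> lam \<and> lam \<le> \<rho> / \<eta> \<and>
    (\<exists>i\<le>N. \<bar>lam * T u (node N i)\<bar> = \<rho>) \<and> u = interp N (\<lambda>i. lam * T u (node N i))"
proof -
  obtain x where x: "x \<in> cube N \<rho>"
    and fixed: "\<And>i. i \<le> N \<Longrightarrow> x i = \<rho> / nodal_max N (interp N x) * T (interp N x) (node N i)"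
    using normalised_fixed_point[OF N \<eta> nondeg] by blast
  define u where "u = interp N x"
  define lam where "lam = \<rho> / nodal_max N u"
  have u: "u \<in> closed_ball_C01 \<rho>"
    unfolding u_def using x by (intro interp_mem_closed_ball_C01 N) (simp add: cube_def)
  have max_ge: "\<eta> \<le> nodal_max N u"
    using nondeg[OF u] abs_T_node_le_nodal_max by (meson order_trans)
  obtain i where i: "i \<le> N" "\<bar>T u (node N i)\<bar> = nodal_max N u"
    using nodal_max_attained by blast
  show ?thesis
  proof (intro exI conjI)
    show "\<rho> / (K * M) \<le> lam"
      unfolding lam_def using nodal_max_le[OF u, of N] max_ge \<eta> rho_pos
      by (intro divide_left_mono) auto
    show "lam \<le> \<rho> / \<eta>"
      unfolding lam_def using max_ge \<eta> rho_pos by (intro divide_left_mono) auto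
    show "\<bar>lam * T u (node N i)\<bar> = \<rho>"
      using i max_ge \<eta> rho_pos by (simp add: lam_def abs_mult)
    show "u = interp N (\<lambda>i. lam * T u (node N i))"
      unfolding u_def by (intro interp_cong) (simp add: fixed lam_def u_def)
  qed (fact u i(1))+
qed

lemma nondegenerate_at_nodes:
  assumes \<eta>: "\<eta> > 0" and nondeg: "\<And>u. u \<in> closed_ball_C01 \<rho> \<Longrightarrow> \<exists>t\<in>{0..1}. \<eta> \<le> \<bar>T u t\<bar>"
  obtains N0 where "N0 \<ge> 1"
    and "\<And>N u. N \<ge> N0 \<Longrightarrow> u \<in> closed_ball_C01 \<rho> \<Longrightarrow> \<exists>i\<le>N. \<eta> / 2 \<le> \<bar>T u (node N i)\<bar>"
proof -
  obtain d where "d > 0" and d: "\<forall>u\<in>closed_ball_C01 \<rho>. \<forall>t\<in>{0..1}. \<forall>t'\<in>{0..1}.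
      \<bar>t - t'\<bar> < d \<longrightarrow> \<bar>T u t - T u t'\<bar> \<le> \<eta> / 2"
    using T_equicontinuous[of "\<eta> / 2"] \<eta> by auto
  obtain N0 :: nat where N0: "1 / d < N0" using reals_Archimedean2 by blast
  then have "N0 \<ge> 1" using \<open>d > 0\<close> by (cases N0) auto
  then show thesis
  proof (rule that)
    fix N u assume N: "N \<ge> N0" and u: "u \<in> closed_ball_C01 \<rho>"
    obtain t where t: "t \<in> {0..1}" "\<eta> \<le> \<bar>T u t\<bar>" using nondeg[OF u] by blast
    have "1 / real N \<le> 1 / real N0" using N \<open>N0 \<ge> 1\<close> by (simp add: frac_le)
    also have "\<dots> < d" using N0 \<open>d > 0\<close> \<open>N0 \<ge> 1\<close> by (simp add: divide_less_eq mult.commute)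
    finally have "1 / real N < d" .
    moreover obtain i where i: "i \<le> N" "\<bar>t - node N i\<bar> < 1 / real N"
      using node_near[OF _ t(1)] N \<open>N0 \<ge> 1\<close> by (metis order_trans)
    ultimately have "\<bar>T u t - T u (node N i)\<bar> \<le> \<eta> / 2"
      using d u t(1) node_in_unit_interval[OF i(1)] by auto
    then show "\<exists>i\<le>N. \<eta> / 2 \<le> \<bar>T u (node N i)\<bar>"
      using i(1) t(2) abs_triangle_ineq2[of "T u t" "T u (node N i)"] by (intro exI[of _ i]) auto
  qed
qed

lemma interpolation_residual:
  assumes u: "\<And>n. u n \<in> closed_ball_C01 \<rho>" and lam: "\<And>n. \<bar>lam n\<bar> \<le> b"
    and G: "\<And>n. G n \<ge> 1" "filterlim G at_top sequentially"
    and interp: "\<And>n. u n = interp (G n) (\<lambda>i. lam n * T (u n) (node (G n) i))"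
  shows "uniform_limit {0..1} (\<lambda>n t. u n t - lam n * T (u n) t) (\<lambda>t. 0) sequentially"
proof (rule uniform_limitI)
  fix e :: real assume e: "e > 0"
  have b: "b \<ge> 0" using lam[of 0] by simp
  obtain d where "d > 0" and d: "\<forall>u\<in>closed_ball_C01 \<rho>. \<forall>t\<in>{0..1}. \<forall>t'\<in>{0..1}.
      \<bar>t - t'\<bar> < d \<longrightarrow> \<bar>T u t - T u t'\<bar> \<le> e / (2 * (b + 1))"
    using T_equicontinuous[of "e / (2 * (b + 1))"] e b by auto
  have "\<forall>\<^sub>F n in sequentially. 1 / d < real (G n)"
    using G(2) unfolding filterlim_at_top
    by (rule eventually_mono[OF spec[of _ "nat \<lceil>1 / d\<rceil> + 1"]]) linarith
  then show "\<forall>\<^sub>F n in sequentially. \<forall>t\<in>{0..1}. dist (u n t - lam n * T (u n) t) 0 < e"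
  proof (rule eventually_mono, intro ballI)
    fix n and t :: real assume Gn: "1 / d < real (G n)" and t: "t \<in> {0..1}"
    have "\<bar>u n t - lam n * T (u n) t\<bar> \<le> b * (e / (2 * (b + 1)))"
    proof (subst interp, rule interp_approx[OF G(1) t])
      fix i assume "i \<le> G n" "\<bar>t - node (G n) i\<bar> < 1 / real (G n)"
      moreover have "1 / real (G n) < d"
        using Gn \<open>d > 0\<close> G(1)[of n] by (simp add: divide_less_eq mult.commute)
      ultimately have "\<bar>T (u n) (node (G n) i) - T (u n) t\<bar> \<le> e / (2 * (b + 1))"
        using d u t node_in_unit_interval by (simp add: abs_minus_commute)
      then show "\<bar>lam n * T (u n) (node (G n) i) - lam n * T (u n) t\<bar> \<le> b * (e / (2 * (b + 1)))"
        using lam[of n]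
        by (simp add: abs_mult mult_mono' flip: right_diff_distrib times_divide_eq_right)
    qed
    also have "\<dots> < e"
      using e b by (simp add: field_simps add_nonneg_pos)
    finally show "dist (u n t - lam n * T (u n) t) 0 < e" by simp
  qed
qed

lemma scaled_T_convergent_subsequence:
  fixes lam :: "nat \<Rightarrow> real" and u :: "nat \<Rightarrow> real \<Rightarrow> real"
  assumes u: "\<And>n. u n \<in> closed_ball_C01 \<rho>" and lam: "\<And>n. \<bar>lam n\<bar> \<le> b"
  obtains r \<Lambda> w where "strict_mono r" "(\<lambda>n. lam (r n)) \<longlonglongrightarrow> \<Lambda>" "continuous_on {0..1} w"
    and "uniform_limit {0..1} (\<lambda>n t. lam (r n) * T (u (r n)) t) w sequentially"
proof -
  define W where "W n t = lam n * T (u n) t" for n t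
  have W_bound: "norm (W n t) \<le> b * (K * M)" if "t \<in> {0..1}" for n t
    unfolding W_def real_norm_def abs_mult using lam[of n] T_bound[OF u that]
    by (intro mult_mono') auto
  have W_equicont: "\<exists>d. 0 < d \<and>
      (\<forall>n t'. t' \<in> {0..1} \<and> norm (t - t') < d \<longrightarrow> norm (W n t - W n t') < e)"
    if t: "t \<in> {0..1}" and e: "0 < e" for t e
  proof -
    obtain d where "d > 0" and d: "\<forall>u\<in>closed_ball_C01 \<rho>. \<forall>t\<in>{0..1}. \<forall>t'\<in>{0..1}.
        \<bar>t - t'\<bar> < d \<longrightarrow> \<bar>T u t - T u t'\<bar> \<le> e / (b + 1)"
      using T_equicontinuous[of "e / (b + 1)"] e lam[of 0] by auto
    have "\<bar>W n t - W n t'\<bar> < e" if "t' \<in> {0..1}" "\<bar>t - t'\<bar> < d" for n t'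
    proof -
      have "\<bar>T (u n) t - T (u n) t'\<bar> \<le> e / (b + 1)"
        using d u t that by blast
      then have "\<bar>W n t - W n t'\<bar> \<le> b * (e / (b + 1))"
        unfolding W_def right_diff_distrib[symmetric] abs_mult
        using lam[of n] by (intro mult_mono') auto
      also have "\<dots> < e" using e lam[of n] by (simp add: field_simps)
      finally show ?thesis .
    qed
    with \<open>d > 0\<close> show ?thesis by auto
  qed
  obtain w r1 where w: "continuous_on {0..1} w" and r1: "strict_mono (r1 :: nat \<Rightarrow> nat)"
    and W_conv: "\<And>e. 0 < e \<Longrightarrow> \<exists>N. \<forall>n t. n \<ge> N \<and> t \<in> {0..1} \<longrightarrow> norm (W (r1 n) t - w t) < e"
    using Arzela_Ascoli[of "{0..1}" W "b * (K * M)", OF compact_Icc W_bound W_equicont] by blast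
  have "bounded (range (lam \<circ> r1))"
    using lam unfolding bounded_iff by auto
  then obtain \<Lambda> r2 where r2: "strict_mono r2" and lam_lim: "(lam \<circ> r1 \<circ> r2) \<longlonglongrightarrow> \<Lambda>"
    using bounded_imp_convergent_subsequence by blast
  have "uniform_limit {0..1} (\<lambda>n. W (r1 n)) w sequentially"
    using W_conv unfolding uniform_limit_sequentially_iff dist_norm by force
  then have "uniform_limit {0..1} (\<lambda>n. W (r1 (r2 n))) w sequentially"
    using filterlim_compose[OF _ filterlim_subseq[OF r2]] by (force simp: o_def)
  then show thesis
    using that[OF strict_mono_o[OF r1 r2] _ w] lam_lim unfolding W_def by (simp add: o_def)
qed

lemma eigenpair_limit:
  fixes lam :: "nat \<Rightarrow> real" and u :: "nat \<Rightarrow> real \<Rightarrow> real"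
  assumes a: "a > 0" and lam: "\<And>n. a \<le> lam n" "\<And>n. lam n \<le> b"
    and u: "\<And>n. u n \<in> closed_ball_C01 \<rho>"
    and peak: "\<And>n. \<exists>t\<in>{0..1}. \<rho> \<le> \<bar>lam n * T (u n) t\<bar>"
    and residual: "uniform_limit {0..1} (\<lambda>n t. u n t - lam n * T (u n) t) (\<lambda>t. 0) sequentially"
  shows "\<exists>\<mu>>0. \<exists>w\<in>sphere_C01 \<rho>. \<forall>t\<in>{0..1}. w t = \<mu> * T w t"
proof -
  have lam_abs: "\<bar>lam n\<bar> \<le> b" for n using lam[of n] a by (simp add: abs_le_iff)
  obtain r \<Lambda> w where r: "strict_mono r" and lam_lim: "(\<lambda>n. lam (r n)) \<longlonglongrightarrow> \<Lambda>"
    and w: "continuous_on {0..1} w"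
    and W_lim: "uniform_limit {0..1} (\<lambda>n t. lam (r n) * T (u (r n)) t) w sequentially"
    by (rule scaled_T_convergent_subsequence[OF u lam_abs])
  have "uniform_limit {0..1}
      (\<lambda>n t. (u (r n) t - lam (r n) * T (u (r n)) t) + lam (r n) * T (u (r n)) t)
      (\<lambda>t. 0 + w t) sequentially"
    using filterlim_compose[OF residual filterlim_subseq[OF r]] W_lim
    by (intro uniform_limit_add) (simp_all add: o_def)
  then have u_lim: "uniform_limit {0..1} (\<lambda>n. u (r n)) w sequentially"
    by simp
  have "\<bar>w t\<bar> \<le> \<rho>" if "t \<in> {0..1}" for t
    using tendsto_rabs[OF tendsto_uniform_limitI[OF u_lim that]] u that
    by (intro LIMSEQ_le_const2) (auto simp: mem_closed_ball_C01)
  then have w_ball: "w \<in> closed_ball_C01 \<rho>"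
    using w by (simp add: mem_closed_ball_C01)
  have w_eq: "w t = \<Lambda> * T w t" if t: "t \<in> {0..1}" for t
    using tendsto_uniform_limitI[OF W_lim t] tendsto_mult[OF lam_lim T_tendsto[OF u w_ball u_lim t]]
    by (rule LIMSEQ_unique)
  have "w \<in> sphere_C01 \<rho>"
  proof (rule mem_sphere_C01I[OF w_ball])
    fix e :: real assume "e > 0"
    then obtain n where n: "\<forall>t\<in>{0..1}. dist (lam (r n) * T (u (r n)) t) (w t) < e"
      using W_lim unfolding uniform_limit_sequentially_iff by blast
    obtain t where "t \<in> {0..1}" "\<rho> \<le> \<bar>lam (r n) * T (u (r n)) t\<bar>"
      using peak by blast
    then show "\<exists>t\<in>{0..1}. \<rho> - e \<le> \<bar>w t\<bar>"
      using n by (force simp: dist_real_def)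
  qed
  moreover have "\<Lambda> \<ge> a"
    using lam_lim lam(1) by (intro LIMSEQ_le_const) auto
  ultimately show ?thesis
    using a w_eq by (intro exI[of _ \<Lambda>] conjI bexI[of _ w] ballI) auto
qed

lemma positive_eigenpair:
  assumes \<eta>: "\<eta> > 0" and nondeg: "\<And>u. u \<in> closed_ball_C01 \<rho> \<Longrightarrow> \<exists>t\<in>{0..1}. \<eta> \<le> \<bar>T u t\<bar>"
  shows "\<exists>\<mu>>0. \<exists>u\<in>sphere_C01 \<rho>. \<forall>t\<in>{0..1}. u t = \<mu> * T u t"
proof -
  obtain N0 where N0: "N0 \<ge> 1"
    and nodes: "\<And>N u. N \<ge> N0 \<Longrightarrow> u \<in> closed_ball_C01 \<rho> \<Longrightarrow> \<exists>i\<le>N. \<eta> / 2 \<le> \<bar>T u (node N i)\<bar>"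
    using nondegenerate_at_nodes[OF \<eta> nondeg] by blast
  define G where "G n = n + N0" for n
  have G: "G n \<ge> 1" for n using N0 by (simp add: G_def)
  have "\<forall>n. \<exists>lam u. u \<in> closed_ball_C01 \<rho> \<and> \<rho> / (K * M) \<le> lam \<and> lam \<le> \<rho> / (\<eta> / 2) \<and>
      (\<exists>i\<le>G n. \<bar>lam * T u (node (G n) i)\<bar> = \<rho>) \<and> u = interp (G n) (\<lambda>i. lam * T u (node (G n) i))"
    using discrete_eigenpair[OF G, of "\<eta> / 2"] nodes \<eta> by (simp add: G_def)
  then obtain lam u where u: "\<And>n. u n \<in> closed_ball_C01 \<rho>"
    and lam: "\<And>n. \<rho> / (K * M) \<le> lam n" "\<And>n. lam n \<le> \<rho> / (\<eta> / 2)"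
    and peak: "\<And>n. \<exists>i\<le>G n. \<bar>lam n * T (u n) (node (G n) i)\<bar> = \<rho>"
    and interp: "\<And>n. u n = interp (G n) (\<lambda>i. lam n * T (u n) (node (G n) i))"
    by metis
  have "\<eta> \<le> K * M"
    using nondeg[of "\<lambda>_. 0"] T_bound[of "\<lambda>_. 0"] rho_pos by (force simp: mem_closed_ball_C01)
  then have a: "\<rho> / (K * M) > 0" using \<eta> rho_pos by simp
  have residual: "uniform_limit {0..1} (\<lambda>n t. u n t - lam n * T (u n) t) (\<lambda>t. 0) sequentially"
  proof (rule interpolation_residual[OF u _ G])
    show "\<bar>lam n\<bar> \<le> \<rho> / (\<eta> / 2)" for n
      using lam[of n] a by (simp add: abs_le_iff)
    show "filterlim G at_top sequentially"
      unfolding G_def by (rule filterlim_add_const_nat_at_top)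
  qed (rule interp)
  have "\<exists>t\<in>{0..1}. \<rho> \<le> \<bar>lam n * T (u n) t\<bar>" for n
    using peak[of n] node_in_unit_interval by fastforce
  then show ?thesis
    using eigenpair_limit[OF a lam u _ residual] by blast
qed

lemma negative_eigenpair:
  assumes \<eta>: "\<eta> > 0" and nondeg: "\<And>u. u \<in> closed_ball_C01 \<rho> \<Longrightarrow> \<exists>t\<in>{0..1}. \<eta> \<le> \<bar>T u t\<bar>"
  shows "\<exists>\<mu><0. \<exists>u\<in>sphere_C01 \<rho>. \<forall>t\<in>{0..1}. u t = \<mu> * T u t"
proof -
  interpret neg: integral_operator \<rho> k "\<lambda>u s. - g u s" K M
    using rho_pos kernel_cont kernel_bound g_bound g_continuous_sup
    by unfold_locales (auto intro: continuous_on_minus g_cont simp: abs_minus_commute)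
  have neg_T: "neg.T u t = - T u t" for u t
    by (simp add: neg.T_def T_def integral_neg)
  obtain \<mu> u where "\<mu> > 0" "u \<in> sphere_C01 \<rho>" "\<forall>t\<in>{0..1}. u t = \<mu> * neg.T u t"
    using neg.positive_eigenpair[OF \<eta>] nondeg by (auto simp: neg_T)
  then show ?thesis
    by (intro exI[of _ "- \<mu>"] conjI bexI[of _ u]) (auto simp: neg_T)
qed

end

section \<open>Superposition operators\<close>

lemma superposition_arg_mem:
  assumes "u \<in> closed_ball_C01 \<rho>" "s \<in> {0..1}" "y \<in> {a..b}"
  shows "(s, u s, y) \<in> {0..1} \<times> {-\<rho>..\<rho>} \<times> {a..b}"
  using assms closed_ball_C01_abs_le[OF assms(1,2)] by (auto simp: abs_le_iff)

lemma superposition_continuous_sup: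
  fixes f :: "real \<Rightarrow> real \<Rightarrow> real \<Rightarrow> real" and H :: "(real \<Rightarrow> real) \<Rightarrow> real"
  assumes f_uc: "uniformly_continuous_on ({0..1} \<times> {-\<rho>..\<rho>} \<times> {a..b}) (\<lambda>(t, x, y). f t x y)"
    and H_cont: "functional_continuous_on (closed_ball_C01 \<rho>) H"
    and H_range: "\<And>u. u \<in> closed_ball_C01 \<rho> \<Longrightarrow> H u \<in> {a..b}"
    and u: "u \<in> closed_ball_C01 \<rho>" and e: "e > 0"
  shows "\<exists>d>0. \<forall>v\<in>closed_ball_C01 \<rho>. (\<forall>s\<in>{0..1}. \<bar>v s - u s\<bar> \<le> d) \<longrightarrow>
    (\<forall>s\<in>{0..1}. \<bar>f s (v s) (H v) - f s (u s) (H u)\<bar> \<le> e)"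
proof -
  obtain df where "df > 0" and df: "\<And>p q. p \<in> {0..1} \<times> {-\<rho>..\<rho>} \<times> {a..b} \<Longrightarrow>
      q \<in> {0..1} \<times> {-\<rho>..\<rho>} \<times> {a..b} \<Longrightarrow> dist q p < df \<Longrightarrow>
      dist ((\<lambda>(t, x, y). f t x y) q) ((\<lambda>(t, x, y). f t x y) p) < e"
    using uniformly_continuous_onE[OF f_uc e] by blast
  obtain dH where "dH > 0" and dH: "\<forall>v\<in>closed_ball_C01 \<rho>. supnorm (\<lambda>t. v t - u t) < dH \<longrightarrow>
      \<bar>H v - H u\<bar> < df / 2"
    using H_cont u \<open>df > 0\<close> unfolding functional_continuous_on_def by (meson half_gt_zero)
  show ?thesis
  proof (intro exI[of _ "min (df / 4) (dH / 2)"] conjI ballI impI)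
    fix v and s :: real assume v: "v \<in> closed_ball_C01 \<rho>" and s: "s \<in> {0..1}"
      and close: "\<forall>s\<in>{0..1}. \<bar>v s - u s\<bar> \<le> min (df / 4) (dH / 2)"
    have "supnorm (\<lambda>t. v t - u t) \<le> dH / 2"
      using close by (intro supnorm_le) auto
    then have "supnorm (\<lambda>t. v t - u t) < dH"
      using \<open>dH > 0\<close> by linarith
    then have "\<bar>H v - H u\<bar> < df / 2" using dH v by blast
    moreover have "\<bar>v s - u s\<bar> \<le> df / 4" using close s by simp
    moreover have "dist (s, v s, H v) (s, u s, H u) \<le> \<bar>v s - u s\<bar> + \<bar>H v - H u\<bar>"
      using sqrt_sum_squares_le_sum_abs[of "v s - u s" "H v - H u"]
      by (simp add: dist_Pair_Pair dist_real_def)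
    ultimately have "dist (s, v s, H v) (s, u s, H u) < df"
      by linarith
    then show "\<bar>f s (v s) (H v) - f s (u s) (H u)\<bar> \<le> e"
      using df[OF superposition_arg_mem[OF u s H_range[OF u]]
          superposition_arg_mem[OF v s H_range[OF v]]]
      by (simp add: dist_real_def)
  qed (use \<open>df > 0\<close> \<open>dH > 0\<close> in auto)
qed

lemma integral_operator_superposition:
  fixes f :: "real \<Rightarrow> real \<Rightarrow> real \<Rightarrow> real" and H :: "(real \<Rightarrow> real) \<Rightarrow> real"
  assumes rho: "\<rho> > 0" and k_cont: "continuous_on ({0..1} \<times> {0..1}) (\<lambda>(t, s). k t s)"
    and H_cont: "functional_continuous_on (closed_ball_C01 \<rho>) H"
    and H_range: "\<And>u. u \<in> closed_ball_C01 \<rho> \<Longrightarrow> H u \<in> {a..b}"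
    and f_cont: "continuous_on ({0..1} \<times> {-\<rho>..\<rho>} \<times> {a..b}) (\<lambda>(t, x, y). f t x y)"
  obtains K M where "integral_operator \<rho> k (\<lambda>u s. f s (u s) (H u)) K M"
proof -
  have box: "compact ({0..1::real} \<times> {-\<rho>..\<rho>} \<times> {a..b::real})"
    by (intro compact_Times compact_Icc)
  have in_box: "(s, u s, H u) \<in> {0..1} \<times> {-\<rho>..\<rho>} \<times> {a..b}"
    if "u \<in> closed_ball_C01 \<rho>" "s \<in> {0..1}" for u s
    using superposition_arg_mem[OF that H_range[OF that(1)]] .
  obtain K where K: "\<And>p. p \<in> {0..1} \<times> {0..1} \<Longrightarrow> norm ((\<lambda>(t, s). k t s) p) \<le> K"
    using continuous_on_compact_bound[OF compact_Times[OF compact_Icc compact_Icc] k_cont] by blast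
  obtain M where M: "\<And>p. p \<in> {0..1} \<times> {-\<rho>..\<rho>} \<times> {a..b} \<Longrightarrow> norm ((\<lambda>(t, x, y). f t x y) p) \<le> M"
    using continuous_on_compact_bound[OF box f_cont] by blast
  have "continuous_on {0..1} ((\<lambda>(t, x, y). f t x y) \<circ> (\<lambda>s. (s, u s, H u)))"
    if "u \<in> closed_ball_C01 \<rho>" for u
    using that in_box
    by (intro continuous_on_compose continuous_intros continuous_on_subset[OF f_cont])
      (auto simp: mem_closed_ball_C01)
  then have "integral_operator \<rho> k (\<lambda>u s. f s (u s) (H u)) K M"
    using rho k_cont K M in_box
      superposition_continuous_sup[OF compact_uniformly_continuous[OF f_cont box] H_cont H_range]
    by unfold_locales (auto simp: o_def)
  then show thesis by (rule that)
qed

theorem theorem2p2: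
  fixes \<rho> Hlo Hhi :: real
    and k :: "real \<Rightarrow> real \<Rightarrow> real"
    and H :: "(real \<Rightarrow> real) \<Rightarrow> real"
    and f :: "real \<Rightarrow> real \<Rightarrow> real \<Rightarrow> real"
    and flo fhi :: "real \<Rightarrow> real"
  defines "Flo \<equiv> (\<lambda>t. integral {0..1} (\<lambda>s. k t s * flo s))"
    and "Fhi \<equiv> (\<lambda>t. integral {0..1} (\<lambda>s. k t s * fhi s))"
  assumes rho_pos: "\<rho> > 0"
    and k_cont: "continuous_on ({0..1} \<times> {0..1}) (\<lambda>(t, s). k t s)"
    and k_nonneg: "\<And>t s. t \<in> {0..1} \<Longrightarrow> s \<in> {0..1} \<Longrightarrow> k t s \<ge> 0"
    and H_cont: "functional_continuous_on (closed_ball_C01 \<rho>) H"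
    and H_bounds: "\<And>u. u \<in> closed_ball_C01 \<rho> \<Longrightarrow> Hlo \<le> H u \<and> H u \<le> Hhi"
    and f_cont: "continuous_on ({0..1} \<times> {-\<rho>..\<rho>} \<times> {Hlo..Hhi}) (\<lambda>(t, u, v). f t u v)"
    and flo_cont: "continuous_on {0..1} flo"
    and fhi_cont: "continuous_on {0..1} fhi"
    and f_bounds: "\<And>t u v. t \<in> {0..1} \<Longrightarrow> u \<in> {-\<rho>..\<rho>} \<Longrightarrow> v \<in> {Hlo..Hhi} \<Longrightarrow>
                     flo t \<le> f t u v \<and> f t u v \<le> fhi t"
    and cond5: "(\<exists>t\<in>{0..1}. Fhi t < 0) \<or> (\<exists>t\<in>{0..1}. Flo t > 0)"
  shows "(\<exists>lp lm up um. lp > 0 \<and> lm < 0 \<and> up \<in> sphere_C01 \<rho> \<and> um \<in> sphere_C01 \<rho> \<and>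
            (\<forall>t\<in>{0..1}. up t = lp * integral {0..1} (\<lambda>s. k t s * f s (up s) (H up))) \<and>
            (\<forall>t\<in>{0..1}. um t = lm * integral {0..1} (\<lambda>s. k t s * f s (um s) (H um))))
       \<and> (\<forall>lam u. u \<in> closed_ball_C01 \<rho> \<and>
            (\<forall>t\<in>{0..1}. u t = lam * integral {0..1} (\<lambda>s. k t s * f s (u s) (H u))) \<longrightarrow>
            (\<forall>tr\<in>{0..1}. Fhi tr < 0 \<longrightarrow> \<bar>lam\<bar> \<le> - \<rho> / Fhi tr) \<and>
            (\<forall>tr\<in>{0..1}. Flo tr > 0 \<longrightarrow> \<bar>lam\<bar> \<le> \<rho> / Flo tr))"
proof -
  obtain K M where "integral_operator \<rho> k (\<lambda>u s. f s (u s) (H u)) K M"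
    using integral_operator_superposition[OF rho_pos k_cont H_cont _ f_cont] H_bounds by auto
  then interpret integral_operator \<rho> k "\<lambda>u s. f s (u s) (H u)" K M .
  have T_eq: "T u t = integral {0..1} (\<lambda>s. k t s * f s (u s) (H u))" for u t
    by (simp add: T_def)
  have T_between: "Flo t \<le> T u t \<and> T u t \<le> Fhi t"
    if u: "u \<in> closed_ball_C01 \<rho>" and t: "t \<in> {0..1}" for u t
  proof -
    have "flo s \<le> f s (u s) (H u) \<and> f s (u s) (H u) \<le> fhi s" if "s \<in> {0..1}" for s
      using f_bounds superposition_arg_mem[OF u that, of "H u" Hlo Hhi] H_bounds[OF u] by auto
    then show ?thesis
      unfolding Flo_def Fhi_def using k_nonneg[OF t]
      by (intro T_between_kernel_integrals flo_cont fhi_cont u t) auto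
  qed
  have "\<exists>\<eta>>0. \<forall>u\<in>closed_ball_C01 \<rho>. \<exists>t\<in>{0..1}. \<eta> \<le> \<bar>T u t\<bar>"
    using cond5 T_between by (force intro: exI[of _ "- Fhi _"] exI[of _ "Flo _"])
  then obtain \<eta> where "\<eta> > 0" "\<And>u. u \<in> closed_ball_C01 \<rho> \<Longrightarrow> \<exists>t\<in>{0..1}. \<eta> \<le> \<bar>T u t\<bar>"
    by blast
  then have "\<exists>lp lm up um. lp > 0 \<and> lm < 0 \<and> up \<in> sphere_C01 \<rho> \<and> um \<in> sphere_C01 \<rho> \<and>
      (\<forall>t\<in>{0..1}. up t = lp * T up t) \<and> (\<forall>t\<in>{0..1}. um t = lm * T um t)"
    using positive_eigenpair negative_eigenpair by blast
  moreover have "(Fhi tr < 0 \<longrightarrow> \<bar>lam\<bar> \<le> - \<rho> / Fhi tr) \<and> (Flo tr > 0 \<longrightarrow> \<bar>lam\<bar> \<le> \<rho> / Flo tr)"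
    if u: "u \<in> closed_ball_C01 \<rho>" and eq: "\<forall>t\<in>{0..1}. u t = lam * T u t" and tr: "tr \<in> {0..1}"
    for lam u tr
    using eigenvalue_bound[OF u tr, of lam "- Fhi tr"] eigenvalue_bound[OF u tr, of lam "Flo tr"]
      eq tr T_between[OF u tr] by auto
  ultimately show ?thesis
    unfolding T_eq by blast
qed

end
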